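(* Consider a convex compact visibility representation of a graph $G$, and let $A$ and $B$ be two of its regions that are mutually visible (so $AB$ is an edge of $G$). If some region other than $A$ and $B$ intersects some line segment joining a point of $A$ to a point of $B$, then the edge $AB$ lies in a triangle ($K_3$) of $G$.
   Context: All graphs are finite and simple. Given a family of pairwise disjoint nonempty connected subsets ("regions") of $\mathbb{R}^2$, a sightline is a closed line segment $\overline{ab}$ with $a\in A$, $b\in B$ for two different regions $A\neq B$ of the family, such that the segment intersects no region of the family other than $A$ and $B$; two regions are mutually visible if there is a sightline between them. A visibility representation of a graph $G$ is such a family with one region per vertex, such that two distinct vertices are adjacent in $G$ if and only if their regions are mutually visible. A convex compact visibility representation is one in which every region is compact and convex. Vertices are identified with their regions. *)

theory Defs
  imports "HOL-Analysis.Analysis"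
begin

definition sightline ::
  "'v set \<Rightarrow> ('v \<Rightarrow> (real \<times> real) set) \<Rightarrow> 'v \<Rightarrow> 'v \<Rightarrow> real \<times> real \<Rightarrow> real \<times> real \<Rightarrow> bool" where
  "sightline V R u v a b \<longleftrightarrow>
     u \<in> V \<and> v \<in> V \<and> u \<noteq> v \<and> a \<in> R u \<and> b \<in> R v \<and>
     (\<forall>w\<in>V. w \<noteq> u \<and> w \<noteq> v \<longrightarrow> closed_segment a b \<inter> R w = {})"

definition mutually_visible ::
  "'v set \<Rightarrow> ('v \<Rightarrow> (real \<times> real) set) \<Rightarrow> 'v \<Rightarrow> 'v \<Rightarrow> bool" where
  "mutually_visible V R u v \<longleftrightarrow> (\<exists>a b. sightline V R u v a b)"

definition simple_graph :: "'v set \<Rightarrow> ('v \<Rightarrow> 'v \<Rightarrow> bool) \<Rightarrow> bool" where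
  "simple_graph V E \<longleftrightarrow> finite V \<and>
     (\<forall>u v. E u v \<longrightarrow> u \<in> V \<and> v \<in> V) \<and>
     (\<forall>u v. E u v \<longrightarrow> E v u) \<and> (\<forall>u. \<not> E u u)"

definition visibility_representation ::
  "'v set \<Rightarrow> ('v \<Rightarrow> 'v \<Rightarrow> bool) \<Rightarrow> ('v \<Rightarrow> (real \<times> real) set) \<Rightarrow> bool" where
  "visibility_representation V E R \<longleftrightarrow>
     (\<forall>v\<in>V. R v \<noteq> {} \<and> connected (R v)) \<and>
     (\<forall>u\<in>V. \<forall>v\<in>V. u \<noteq> v \<longrightarrow> R u \<inter> R v = {}) \<and>
     (\<forall>u\<in>V. \<forall>v\<in>V. u \<noteq> v \<longrightarrow> (E u v \<longleftrightarrow> mutually_visible V R u v))"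

definition convex_compact_visibility_representation ::
  "'v set \<Rightarrow> ('v \<Rightarrow> 'v \<Rightarrow> bool) \<Rightarrow> ('v \<Rightarrow> (real \<times> real) set) \<Rightarrow> bool" where
  "convex_compact_visibility_representation V E R \<longleftrightarrow>
     visibility_representation V E R \<and> (\<forall>v\<in>V. compact (R v) \<and> convex (R v))"

end

theory Submission
  imports Defs
begin

text \<open>
  Up to exchanging the roles of \<open>A\<close> and \<open>B\<close>, the hypotheses provide an apex \<open>x \<in> A\<close> and points
  \<open>y\<^sub>0, y\<^sub>1 \<in> B\<close> such that the segment \<open>x y\<^sub>0\<close> meets no third region while \<open>x y\<^sub>1\<close> does: take a
  sightline \<open>a\<^sub>0 b\<^sub>0\<close>, and look at \<open>a\<^sub>0 b\<close> if it is blocked, at \<open>b a\<^sub>0\<close> and \<open>b a\<close> otherwise.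
  Sweep the segments from \<open>x\<close> to the points \<open>y(t)\<close> of \<open>y\<^sub>0 y\<^sub>1 \<subseteq> B\<close> and let
  \<open>c = (1 - s) x + s y(t)\<close> be the first point of a third region \<open>C\<close>, for the lexicographically least
  parameter \<open>(t, s)\<close>. By convexity \<open>x c\<close> is a sightline between \<open>A\<close> and \<open>C\<close>. For \<open>t'\<close> slightly
  below \<open>t\<close>, the segment \<open>c y(t')\<close> sweeps only earlier segments, so it meets no third region
  besides \<open>C\<close>, and by compactness it still avoids \<open>A\<close>; so it is a sightline between \<open>C\<close> and \<open>B\<close>.
\<close>

lemma closed_segment_line_image:
  fixes x z :: "'a::real_vector"
  assumes "a \<le> b"
  shows "closed_segment ((1 - a) *\<^sub>R x + a *\<^sub>R z) ((1 - b) *\<^sub>R x + b *\<^sub>R z)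
           = (\<lambda>\<sigma>. (1 - \<sigma>) *\<^sub>R x + \<sigma> *\<^sub>R z) ` {a..b}"
proof -
  have line: "(1 - \<sigma>) *\<^sub>R x + \<sigma> *\<^sub>R z = x + \<sigma> *\<^sub>R (z - x)" for \<sigma> :: real
    by (simp add: algebra_simps)
  have "closed_segment (x + a *\<^sub>R (z - x)) (x + b *\<^sub>R (z - x))
          = (\<lambda>\<sigma>. x + \<sigma> *\<^sub>R (z - x)) ` closed_segment a b"
    using closed_segment_linear_image[of "\<lambda>\<sigma>. \<sigma> *\<^sub>R (z - x)" a b]
    by (simp add: closed_segment_translation image_comp o_def)
  then show ?thesis
    using assms by (simp add: line closed_segment_eq_real_ivl)
qed

lemma compact_attains_lex_min:
  fixes P :: "(real \<times> real) set"
  assumes "compact P" "P \<noteq> {}"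
  obtains t0 s0 where "(t0, s0) \<in> P" "\<And>t s. (t, s) \<in> P \<Longrightarrow> t0 < t \<or> (t0 = t \<and> s0 \<le> s)"
proof -
  have "compact (fst ` P)"
    using assms(1) by (intro compact_continuous_image continuous_intros)
  then obtain t0 where t0: "t0 \<in> fst ` P" "\<And>t. t \<in> fst ` P \<Longrightarrow> t0 \<le> t"
    using compact_attains_inf[of "fst ` P"] assms(2) by blast
  let ?Q = "snd ` (P \<inter> fst -` {t0})"
  have "compact ?Q"
    using assms(1) by (intro compact_continuous_image continuous_intros compact_Int_closed closed_vimage_fst) auto
  moreover have "?Q \<noteq> {}" using t0(1) by force
  ultimately obtain s0 where s0: "s0 \<in> ?Q" "\<And>s. s \<in> ?Q \<Longrightarrow> s0 \<le> s"
    using compact_attains_inf[of ?Q] by blast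
  show thesis
  proof (rule that)
    show "(t0, s0) \<in> P"
      using s0(1) by auto
    fix t s assume ts: "(t, s) \<in> P"
    then have "t0 \<le> t"
      using t0(2) by force
    moreover have "s0 \<le> s" if "t = t0"
      using s0(2) ts that by force
    ultimately show "t0 < t \<or> (t0 = t \<and> s0 \<le> s)"
      by auto
  qed
qed

lemma eventually_closed_segment_disjoint:
  fixes a b :: "'a::euclidean_space"
  assumes "closed S" "closed_segment a b \<inter> S = {}"
  shows "\<forall>\<^sub>F b' in nhds b. closed_segment a b' \<inter> S = {}"
proof -
  obtain \<delta> where "\<delta> > 0" and \<delta>: "\<And>p q. p \<in> closed_segment a b \<Longrightarrow> q \<in> S \<Longrightarrow> \<delta> \<le> dist p q"
    using separate_compact_closed[OF compact_segment assms] by blast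
  have "closed_segment a b' \<inter> S = {}" if "dist b' b < \<delta>" for b'
  proof -
    have "(1 - l) *\<^sub>R a + l *\<^sub>R b' \<notin> S" if "0 \<le> l" "l \<le> 1" for l
    proof
      assume "(1 - l) *\<^sub>R a + l *\<^sub>R b' \<in> S"
      moreover have "(1 - l) *\<^sub>R a + l *\<^sub>R b \<in> closed_segment a b"
        using that by (auto simp: in_segment)
      moreover have "dist ((1 - l) *\<^sub>R a + l *\<^sub>R b) ((1 - l) *\<^sub>R a + l *\<^sub>R b') = l * dist b b'"
        using that by (simp add: dist_norm flip: scaleR_diff_right)
      moreover have "l * dist b b' \<le> dist b b'"
        using that by (simp add: mult_left_le_one_le)
      then have "l * dist b b' < \<delta>"
        using \<open>dist b' b < \<delta>\<close> by (simp add: dist_commute)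
      ultimately show False using \<delta> by fastforce
    qed
    then show ?thesis by (auto simp: in_segment)
  qed
  then show ?thesis
    using \<open>\<delta> > 0\<close> eventually_nhds_metric by blast
qed

locale segment_fan =
  fixes x y0 y1 :: "'a::euclidean_space"
begin

definition tip :: "real \<Rightarrow> 'a" where
  "tip t = (1 - t) *\<^sub>R y0 + t *\<^sub>R y1"

definition fan_point :: "real \<Rightarrow> real \<Rightarrow> 'a" where
  "fan_point t s = (1 - s) *\<^sub>R x + s *\<^sub>R tip t"

definition first_hit :: "'a set \<Rightarrow> real \<Rightarrow> real \<Rightarrow> bool" where
  "first_hit S t0 s0 \<longleftrightarrow> t0 \<in> {0<..1} \<and> s0 \<in> {0<..1} \<and> fan_point t0 s0 \<in> S \<and>
     (\<forall>t\<in>{0..1}. \<forall>s\<in>{0..1}. fan_point t s \<in> S \<longrightarrow> t0 < t \<or> (t0 = t \<and> s0 \<le> s))"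

lemma tip_0 [simp]: "tip 0 = y0"
  and tip_1 [simp]: "tip 1 = y1"
  by (simp_all add: tip_def)

lemma fan_point_0 [simp]: "fan_point t 0 = x"
  and fan_point_1 [simp]: "fan_point t 1 = tip t"
  by (simp_all add: fan_point_def)

lemma tip_in_closed_segment: "0 \<le> t \<Longrightarrow> t \<le> 1 \<Longrightarrow> tip t \<in> closed_segment y0 y1"
  by (auto simp: tip_def in_segment)

lemma tip_convex_combination: "tip ((1 - \<mu>) * a + \<mu> * b) = (1 - \<mu>) *\<^sub>R tip a + \<mu> *\<^sub>R tip b"
  by (simp add: tip_def algebra_simps)

lemma closed_segment_fan_point:
  "a \<le> b \<Longrightarrow> closed_segment (fan_point t a) (fan_point t b) = fan_point t ` {a..b}"
  unfolding fan_point_def[abs_def] by (rule closed_segment_line_image)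

lemma closed_segment_apex_tip: "closed_segment x (tip t) = fan_point t ` {0..1}"
  using closed_segment_fan_point[of 0 1 t] by simp

lemma closed_segment_fan_point_earlier_tip:
  assumes "0 \<le> s0" "s0 \<le> 1" "0 \<le> t1" "t1 < t0"
    and "p \<in> closed_segment (fan_point t0 s0) (tip t1)" "p \<noteq> fan_point t0 s0"
  obtains t s where "0 \<le> t" "t < t0" "0 < s" "s \<le> 1" "p = fan_point t s"
proof -
  obtain l where l0: "0 \<le> l" "l \<le> 1" "p = (1 - l) *\<^sub>R fan_point t0 s0 + l *\<^sub>R tip t1"
    using assms(5) by (auto simp: in_segment)
  moreover have "l \<noteq> 0"
    using l0(3) assms(6) by auto
  ultimately have l: "0 < l" "l \<le> 1" "p = (1 - l) *\<^sub>R fan_point t0 s0 + l *\<^sub>R tip t1"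
    by simp_all
  define s where "s = (1 - l) * s0 + l"
  define \<mu> where "\<mu> = l / s"
  have "0 \<le> (1 - l) * s0" "(1 - l) * s0 \<le> 1 - l"
    using l assms(1,2) by (simp_all add: mult_left_le)
  then have s: "l \<le> s" "0 < s" "s \<le> 1"
    using l by (simp_all add: s_def)
  then have \<mu>: "0 < \<mu>" "\<mu> \<le> 1" "s * \<mu> = l"
    using l by (simp_all add: \<mu>_def)
  have "p = fan_point ((1 - \<mu>) * t0 + \<mu> * t1) s"
    unfolding l(3) fan_point_def tip_convex_combination scaleR_right_distrib scaleR_scaleR
    using \<mu>(3) by (simp add: s_def algebra_simps)
  moreover have "0 \<le> (1 - \<mu>) * t0 + \<mu> * t1"
    using \<mu> assms(3,4) by (intro add_nonneg_nonneg mult_nonneg_nonneg) auto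
  moreover have "(1 - \<mu>) * t0 + \<mu> * t1 < t0"
    using \<mu>(1) assms(4) by (simp add: algebra_simps)
  ultimately show thesis
    using that s by blast
qed

lemma continuous_on_fan_point: "continuous_on UNIV (\<lambda>(t, s). fan_point t s)"
  unfolding fan_point_def tip_def case_prod_unfold by (intro continuous_intros)

lemma first_hit_exists:
  assumes "closed S" "closed_segment x y0 \<inter> S = {}" "closed_segment x y1 \<inter> S \<noteq> {}"
  obtains t0 s0 where "first_hit S t0 s0"
proof -
  define P where "P = ({0..1} \<times> {0..1}) \<inter> (\<lambda>(t, s). fan_point t s) -` S"
  have "compact P"
    unfolding P_def using assms(1) continuous_on_fan_point
    by (intro compact_Int_closed compact_Times compact_Icc closed_vimage)
  moreover have "P \<noteq> {}"
  proof -
    obtain p where "p \<in> closed_segment x y1" "p \<in> S"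
      using assms(3) by blast
    then have "p \<in> fan_point 1 ` {0..1}" "p \<in> S"
      using closed_segment_apex_tip[of 1] by simp_all
    then obtain s where "s \<in> {0..1}" "fan_point 1 s \<in> S" by blast
    then have "(1, s) \<in> P" by (simp add: P_def)
    then show ?thesis by blast
  qed
  ultimately obtain t0 s0 where "(t0, s0) \<in> P"
    and least: "\<And>t s. (t, s) \<in> P \<Longrightarrow> t0 < t \<or> (t0 = t \<and> s0 \<le> s)"
    by (rule compact_attains_lex_min) blast
  then have range: "t0 \<in> {0..1}" "s0 \<in> {0..1}" and hit: "fan_point t0 s0 \<in> S"
    by (auto simp: P_def)
  have "t0 \<noteq> 0"
  proof
    assume "t0 = 0"
    have "fan_point 0 s0 \<in> closed_segment x y0"
      using imageI[OF range(2), of "fan_point 0"] closed_segment_apex_tip[of 0] by simp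
    then show False
      using hit assms(2) \<open>t0 = 0\<close> by blast
  qed
  moreover have "s0 \<noteq> 0"
    using hit assms(2) by auto
  ultimately have "first_hit S t0 s0"
    using range hit least by (auto simp: first_hit_def P_def)
  then show thesis by (rule that)
qed

context
  fixes S t0 s0
  assumes first: "first_hit S t0 s0"
begin

lemma first_hit_ranges: "0 < t0" "t0 \<le> 1" "0 < s0" "s0 \<le> 1" "fan_point t0 s0 \<in> S"
  using first by (auto simp: first_hit_def)

lemma first_hit_least:
  "0 \<le> t \<Longrightarrow> t \<le> 1 \<Longrightarrow> 0 \<le> s \<Longrightarrow> s \<le> 1 \<Longrightarrow> fan_point t s \<in> S \<Longrightarrow>
    t0 < t \<or> (t0 = t \<and> s0 \<le> s)"
  using first by (auto simp: first_hit_def)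

lemma first_hit_apex_segment: "closed_segment x (fan_point t0 s0) \<inter> S = {fan_point t0 s0}"
proof -
  have "p = fan_point t0 s0" if "p \<in> closed_segment x (fan_point t0 s0)" "p \<in> S" for p
  proof -
    have "p \<in> fan_point t0 ` {0..s0}"
      using that(1) closed_segment_fan_point[of 0 s0 t0] first_hit_ranges by simp
    then obtain s where s: "0 \<le> s" "s \<le> s0" "p = fan_point t0 s" by auto
    then have "s0 \<le> s"
      using first_hit_least[of t0 s] that(2) first_hit_ranges by auto
    then show ?thesis
      using s by simp
  qed
  moreover have "fan_point t0 s0 \<in> closed_segment x (fan_point t0 s0)"
    by simp
  ultimately show ?thesis
    using first_hit_ranges by blast
qed

lemma first_hit_apex_segment_avoids:
  assumes "convex B" "y0 \<in> B" "y1 \<in> B" "B \<inter> S = {}"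
  shows "closed_segment x (fan_point t0 s0) \<inter> B = {}"
proof (rule ccontr)
  assume "closed_segment x (fan_point t0 s0) \<inter> B \<noteq> {}"
  then obtain s where s: "0 \<le> s" "s \<le> s0" "fan_point t0 s \<in> B"
    using closed_segment_fan_point[of 0 s0 t0] first_hit_ranges by auto
  have "tip t0 \<in> closed_segment y0 y1"
    using tip_in_closed_segment first_hit_ranges by simp
  then have "tip t0 \<in> B"
    using closed_segment_subset[OF assms(2,3,1)] by blast
  then have "closed_segment (fan_point t0 s) (fan_point t0 1) \<subseteq> B"
    using s(3) assms(1) by (simp add: closed_segment_subset)
  moreover have "fan_point t0 s0 \<in> closed_segment (fan_point t0 s) (fan_point t0 1)"
    using closed_segment_fan_point[of s 1 t0] s first_hit_ranges by auto
  ultimately show False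
    using assms(4) first_hit_ranges by blast
qed

lemma first_hit_tip_segment_avoids:
  assumes "convex A" "x \<in> A" "A \<inter> S = {}"
  shows "closed_segment (fan_point t0 s0) (tip t0) \<inter> A = {}"
proof (rule ccontr)
  assume "closed_segment (fan_point t0 s0) (tip t0) \<inter> A \<noteq> {}"
  then obtain s where s: "s0 \<le> s" "s \<le> 1" "fan_point t0 s \<in> A"
    using closed_segment_fan_point[of s0 1 t0] first_hit_ranges by auto
  then have "closed_segment (fan_point t0 0) (fan_point t0 s) \<subseteq> A"
    using assms(1,2) by (simp add: closed_segment_subset)
  moreover have "fan_point t0 s0 \<in> closed_segment (fan_point t0 0) (fan_point t0 s)"
    using closed_segment_fan_point[of 0 s t0] s first_hit_ranges by auto
  ultimately show False
    using assms(3) first_hit_ranges by blast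
qed

lemma first_hit_earlier_tip_segment:
  assumes "0 \<le> t1" "t1 < t0"
  shows "closed_segment (fan_point t0 s0) (tip t1) \<inter> S = {fan_point t0 s0}"
proof -
  have "p = fan_point t0 s0" if p: "p \<in> closed_segment (fan_point t0 s0) (tip t1)" "p \<in> S" for p
  proof (rule ccontr)
    assume "p \<noteq> fan_point t0 s0"
    have s0: "0 \<le> s0" "s0 \<le> 1"
      using first_hit_ranges by simp_all
    obtain t s where ts: "0 \<le> t" "t < t0" "0 < s" "s \<le> 1" "p = fan_point t s"
      by (rule closed_segment_fan_point_earlier_tip[OF s0 assms p(1) \<open>p \<noteq> fan_point t0 s0\<close>])
    have "t0 < t \<or> (t0 = t \<and> s0 \<le> s)"
      by (rule first_hit_least) (use ts p(2) first_hit_ranges in auto)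
    then show False
      using ts(2) by simp
  qed
  moreover have "fan_point t0 s0 \<in> closed_segment (fan_point t0 s0) (tip t1)"
    by simp
  ultimately show ?thesis
    using first_hit_ranges by blast
qed

end

lemma obstacle_visible_from_both_ends:
  assumes A: "convex A" "closed A" "x \<in> A" "A \<inter> S = {}"
    and B: "convex B" "y0 \<in> B" "y1 \<in> B" "B \<inter> S = {}"
    and S: "closed S" "closed_segment x y0 \<inter> S = {}" "closed_segment x y1 \<inter> S \<noteq> {}"
  obtains c y where "c \<in> S" "y \<in> B"
    "closed_segment x c \<inter> S = {c}" "closed_segment x c \<inter> B = {}"
    "closed_segment c y \<inter> S = {c}" "closed_segment c y \<inter> A = {}"
proof -
  obtain t0 s0 where first: "first_hit S t0 s0"
    using first_hit_exists[OF S] .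
  note ranges = first_hit_ranges[OF first]
  have "\<forall>\<^sub>F y in nhds (tip t0). closed_segment (fan_point t0 s0) y \<inter> A = {}"
    using A(2) first_hit_tip_segment_avoids[OF first A(1,3,4)]
    by (rule eventually_closed_segment_disjoint)
  moreover have "filterlim tip (nhds (tip t0)) (at_left t0)"
    unfolding tip_def by (intro tendsto_intros)
  ultimately have "\<forall>\<^sub>F t in at_left t0. closed_segment (fan_point t0 s0) (tip t) \<inter> A = {}"
    by (rule eventually_compose_filterlim)
  moreover have "\<forall>\<^sub>F t in at_left t0. 0 < t \<and> t < t0"
    using eventually_at_left_real[OF ranges(1)] by simp
  ultimately have
    "\<forall>\<^sub>F t in at_left t0. closed_segment (fan_point t0 s0) (tip t) \<inter> A = {} \<and> 0 < t \<and> t < t0"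
    by (rule eventually_conj)
  then obtain t1 where t1: "0 < t1" "t1 < t0" "closed_segment (fan_point t0 s0) (tip t1) \<inter> A = {}"
    using eventually_happens'[OF trivial_limit_at_left_real] by blast
  have "tip t1 \<in> B"
    using t1 ranges tip_in_closed_segment[of t1] closed_segment_subset[OF B(2,3,1)] by auto
  then show thesis
    using that[of "fan_point t0 s0" "tip t1"] ranges t1
      first_hit_apex_segment[OF first] first_hit_apex_segment_avoids[OF first B]
      first_hit_earlier_tip_segment[OF first] by simp
qed

end

lemma sightline_commute: "sightline V R u v a b \<longleftrightarrow> sightline V R v u b a"
  unfolding sightline_def by (auto simp: closed_segment_commute)

lemma mutually_visible_commute: "mutually_visible V R u v \<longleftrightarrow> mutually_visible V R v u"
  unfolding mutually_visible_def by (metis sightline_commute)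

lemma common_visible_region_from_apex:
  fixes V :: "'v set" and R :: "'v \<Rightarrow> (real \<times> real) set"
  assumes "finite V"
    and disjoint: "\<forall>p\<in>V. \<forall>q\<in>V. p \<noteq> q \<longrightarrow> R p \<inter> R q = {}"
    and compact_convex: "\<forall>p\<in>V. compact (R p) \<and> convex (R p)"
    and sight: "sightline V R u v x y0" and "y1 \<in> R v"
    and "w \<in> V" "w \<noteq> u" "w \<noteq> v" "closed_segment x y1 \<inter> R w \<noteq> {}"
  shows "\<exists>c\<in>V. c \<noteq> u \<and> c \<noteq> v \<and> mutually_visible V R u c \<and> mutually_visible V R c v"
proof -
  have uv: "u \<in> V" "v \<in> V" "u \<noteq> v" "x \<in> R u" "y0 \<in> R v"
    and clear: "\<forall>p\<in>V. p \<noteq> u \<and> p \<noteq> v \<longrightarrow> closed_segment x y0 \<inter> R p = {}"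
    using sight by (simp_all add: sightline_def)
  define S where "S = (\<Union>p\<in>V - {u, v}. R p)"
  have closed_S: "closed S"
    unfolding S_def using assms(1) compact_convex by (blast intro: compact_imp_closed)
  have disjoint_S: "R u \<inter> S = {}" "R v \<inter> S = {}"
    using disjoint uv unfolding S_def by blast+
  have clear_S: "closed_segment x y0 \<inter> S = {}" and hit_S: "closed_segment x y1 \<inter> S \<noteq> {}"
    using clear assms(6-9) unfolding S_def by blast+
  have Ru: "convex (R u)" "closed (R u)" and Rv: "convex (R v)"
    using compact_convex uv by (simp_all add: compact_imp_closed)
  obtain c y where "c \<in> S" "y \<in> R v"
    and xc: "closed_segment x c \<inter> S = {c}" "closed_segment x c \<inter> R v = {}"
    and cy: "closed_segment c y \<inter> S = {c}" "closed_segment c y \<inter> R u = {}"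
    by (rule segment_fan.obstacle_visible_from_both_ends[OF Ru uv(4) disjoint_S(1)
          Rv uv(5) assms(5) disjoint_S(2) closed_S clear_S hit_S])
  then obtain C where C: "C \<in> V" "C \<noteq> u" "C \<noteq> v" "c \<in> R C"
    unfolding S_def by blast
  have avoid: "\<forall>r\<in>V - {u, v, C}. closed_segment p q \<inter> R r = {}"
    if "closed_segment p q \<inter> S = {c}" for p q
  proof
    fix r assume r: "r \<in> V - {u, v, C}"
    have "R r \<subseteq> S" "c \<notin> R r"
      using r C disjoint unfolding S_def by blast+
    then show "closed_segment p q \<inter> R r = {}"
      using that by (blast dest!: equalityD1)
  qed
  have "sightline V R u C x c"
    unfolding sightline_def
  proof (intro conjI ballI impI)
    fix r assume "r \<in> V" "r \<noteq> u \<and> r \<noteq> C"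
    then show "closed_segment x c \<inter> R r = {}"
      using xc(2) avoid[OF xc(1)] by (cases "r = v") simp_all
  qed (use uv C in simp_all)
  moreover have "sightline V R C v c y"
    unfolding sightline_def
  proof (intro conjI ballI impI)
    fix r assume "r \<in> V" "r \<noteq> C \<and> r \<noteq> v"
    then show "closed_segment c y \<inter> R r = {}"
      using cy(2) avoid[OF cy(1)] by (cases "r = u") simp_all
  qed (use uv C \<open>y \<in> R v\<close> in simp_all)
  ultimately show ?thesis
    unfolding mutually_visible_def using C by blast
qed

lemma common_visible_region_of_blocked_segment:
  fixes V :: "'v set" and R :: "'v \<Rightarrow> (real \<times> real) set"
  assumes "finite V"
    and "\<forall>p\<in>V. \<forall>q\<in>V. p \<noteq> q \<longrightarrow> R p \<inter> R q = {}"
    and "\<forall>p\<in>V. compact (R p) \<and> convex (R p)"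
    and "mutually_visible V R u v" "a \<in> R u" "b \<in> R v"
    and "w \<in> V" "w \<noteq> u" "w \<noteq> v" "closed_segment a b \<inter> R w \<noteq> {}"
  shows "\<exists>c\<in>V. c \<noteq> u \<and> c \<noteq> v \<and> mutually_visible V R u c \<and> mutually_visible V R v c"
proof -
  note from_apex = common_visible_region_from_apex[OF assms(1-3)]
  obtain a0 b0 where sight: "sightline V R u v a0 b0"
    using assms(4) by (auto simp: mutually_visible_def)
  show ?thesis
  proof (cases "sightline V R v u b a0")
    case True
    moreover have "closed_segment b a \<inter> R w \<noteq> {}"
      using assms(10) by (simp add: closed_segment_commute)
    ultimately obtain c where "c \<in> V" "c \<noteq> v" "c \<noteq> u"
      "mutually_visible V R v c" "mutually_visible V R c u"
      using from_apex[of v u b a0 a w] assms(5,7-9) by blast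
    then show ?thesis
      using mutually_visible_commute[of V R c u] by blast
  next
    case False
    then obtain w' where "w' \<in> V" "w' \<noteq> u" "w' \<noteq> v" "closed_segment b a0 \<inter> R w' \<noteq> {}"
      using sight assms(6) unfolding sightline_def by blast
    then obtain c where "c \<in> V" "c \<noteq> u" "c \<noteq> v"
      "mutually_visible V R u c" "mutually_visible V R c v"
      using from_apex[OF sight assms(6), of w'] by (auto simp: closed_segment_commute)
    then show ?thesis
      using mutually_visible_commute[of V R c v] by blast
  qed
qed

theorem lemma1:
  fixes V :: "'v set" and E :: "'v \<Rightarrow> 'v \<Rightarrow> bool" and R :: "'v \<Rightarrow> (real \<times> real) set"
  assumes "simple_graph V E"
    and "convex_compact_visibility_representation V E R"
    and "u \<in> V" and "v \<in> V" and "u \<noteq> v"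
    and "mutually_visible V R u v"
    and "a \<in> R u" and "b \<in> R v"
    and "w \<in> V" and "w \<noteq> u" and "w \<noteq> v"
    and "closed_segment a b \<inter> R w \<noteq> {}"
  shows "\<exists>x\<in>V. x \<noteq> u \<and> x \<noteq> v \<and> E u v \<and> E u x \<and> E v x"
proof -
  have disjoint: "\<forall>p\<in>V. \<forall>q\<in>V. p \<noteq> q \<longrightarrow> R p \<inter> R q = {}"
    and compact_convex: "\<forall>p\<in>V. compact (R p) \<and> convex (R p)"
    and edge_iff: "\<And>p q. p \<in> V \<Longrightarrow> q \<in> V \<Longrightarrow> p \<noteq> q \<Longrightarrow> E p q \<longleftrightarrow> mutually_visible V R p q"
    using assms(2)
    by (auto simp: convex_compact_visibility_representation_def visibility_representation_def)
  have "finite V"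
    using assms(1) by (simp add: simple_graph_def)
  then obtain c where c: "c \<in> V" "c \<noteq> u" "c \<noteq> v"
    "mutually_visible V R u c" "mutually_visible V R v c"
    using common_visible_region_of_blocked_segment[OF _ disjoint compact_convex assms(6-12)] by blast
  have "E u v"
    using edge_iff assms(3-6) by blast
  moreover have "E u c" "E v c"
    using edge_iff assms(3,4) c by auto
  ultimately show ?thesis
    using c by blast
qed

end
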